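(* Let $\langle S,L,\tau,\ell\rangle$ be a labelled Markov chain and let $s,t\in S$ with $s\simeq t$. Then the function $\delta_{\_}(s,t):(S\to\mathcal{D}(S))\to[0,1]$, $\sigma\mapsto\delta_\sigma(s,t)$, is continuous at $\tau$; that is, for every sequence $(\tau_n)_n$ of transition functions $\tau_n:S\to\mathcal{D}(S)$ converging to $\tau$ we have $\lim_n \delta_{\tau_n}(s,t)=0$.
   Context: A labelled Markov chain is a tuple $\langle S,L,\tau,\ell\rangle$ with $S$ a finite set of states, $L$ a finite set of labels, $\tau:S\to\mathcal{D}(S)$ a transition function ($\mathcal{D}(X)$ = probability distributions on $X$) and $\ell:S\to L$ a labelling; assume $|\ell(S)|\ge 2$. For $\mu,\nu\in\mathcal{D}(X)$, the set of couplings is $\Omega(\mu,\nu)=\{\omega\in\mathcal{D}(X\times X)\mid \forall x:\ \sum_y\omega(x,y)=\mu(x),\ \sum_y\omega(y,x)=\nu(x)\}$. Transition functions $S\to\mathcal{D}(S)$ are equipped with the metric $d_F(\sigma,\tau)=\max_{s\in S}\max_{x\in S}|\sigma(s)(x)-\tau(s)(x)|$, and convergence refers to this metric. The probabilistic bisimilarity distance $\delta_\tau:S\times S\to[0,1]$ is the least fixed point of $\Delta_\tau$, where $\Delta_\tau(d)(s,t)=1$ if $\ell(s)\ne\ell(t)$ and $\Delta_\tau(d)(s,t)=\inf_{\omega\in\Omega(\tau(s),\tau(t))}\sum_{u,v}\omega(u,v)d(u,v)$ otherwise. Let $S^2_\Delta=\{(s,s)\mid s\in S\}$, $S^2_1=\{(s,t)\mid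 \ell(s)\ne\ell(t)\}$, $S^2_{0?}=(S\times S)\setminus(S^2_\Delta\cup S^2_1)$. A policy for $\tau$ is a map $P:S\times S\to\mathcal{D}(S\times S)$ such that $P(s,t)\in\Omega(\tau(s),\tau(t))$ for all $(s,t)\in S^2_\Delta\cup S^2_{0?}$, and $P(s,t)$ is the point mass on $(s,t)$ for $(s,t)\in S^2_1$; $\mathcal{P}_\tau$ denotes the set of policies, and each $P$ induces a Markov chain $\langle S\times S,P\rangle$. Robust bisimilarity: $s\simeq t$ iff there is $P\in\mathcal{P}_\tau$ such that $(s,t)$ reaches $S^2_\Delta$ with probability $1$ in $\langle S\times S,P\rangle$. *)

theory Defs
  imports "HOL-Probability.Probability"
begin

text \<open>Labelled Markov chains over a finite state type 'a: transition function
  tau :: 'a => 'a pmf, labelling lab :: 'a => 'l.\<close>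

definition couplings :: "'a pmf \<Rightarrow> 'a pmf \<Rightarrow> ('a \<times> 'a) pmf set" where
  "couplings \<mu> \<nu> = {\<omega>. map_pmf fst \<omega> = \<mu> \<and> map_pmf snd \<omega> = \<nu>}"

definition dF :: "('a::finite \<Rightarrow> 'a pmf) \<Rightarrow> ('a \<Rightarrow> 'a pmf) \<Rightarrow> real" where
  "dF \<sigma> \<tau> = Max (range (\<lambda>(s, x). \<bar>pmf (\<sigma> s) x - pmf (\<tau> s) x\<bar>))"

definition Delta :: "('a::finite \<Rightarrow> 'a pmf) \<Rightarrow> ('a \<Rightarrow> 'l) \<Rightarrow> ('a \<Rightarrow> 'a \<Rightarrow> real) \<Rightarrow> ('a \<Rightarrow> 'a \<Rightarrow> real)" where
  "Delta \<tau> lab d s t =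
     (if lab s \<noteq> lab t then 1
      else (INF \<omega>\<in>couplings (\<tau> s) (\<tau> t). \<Sum>(u, v)\<in>UNIV. pmf \<omega> (u, v) * d u v))"

definition unit_valued :: "('a \<Rightarrow> 'a \<Rightarrow> real) \<Rightarrow> bool" where
  "unit_valued d \<longleftrightarrow> (\<forall>x y. 0 \<le> d x y \<and> d x y \<le> 1)"

definition delta :: "('a::finite \<Rightarrow> 'a pmf) \<Rightarrow> ('a \<Rightarrow> 'l) \<Rightarrow> 'a \<Rightarrow> 'a \<Rightarrow> real" where
  "delta \<tau> lab = (THE d. unit_valued d \<and> Delta \<tau> lab d = d \<and>
       (\<forall>d'. unit_valued d' \<and> Delta \<tau> lab d' = d' \<longrightarrow> d \<le> d'))"

definition policies :: "('a::finite \<Rightarrow> 'a pmf) \<Rightarrow> ('a \<Rightarrow> 'l) \<Rightarrow> ('a \<times> 'a \<Rightarrow> ('a \<times> 'a) pmf) set" where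
  "policies \<tau> lab = {P. \<forall>s t. (lab s = lab t \<longrightarrow> P (s, t) \<in> couplings (\<tau> s) (\<tau> t)) \<and>
                              (lab s \<noteq> lab t \<longrightarrow> P (s, t) = return_pmf (s, t))}"

fun reach_within :: "('b \<Rightarrow> 'b pmf) \<Rightarrow> 'b set \<Rightarrow> nat \<Rightarrow> 'b \<Rightarrow> real" where
  "reach_within P T 0 x = (if x \<in> T then 1 else 0)"
| "reach_within P T (Suc n) x =
     (if x \<in> T then 1 else measure_pmf.expectation (P x) (reach_within P T n))"

definition reach_prob :: "('b \<Rightarrow> 'b pmf) \<Rightarrow> 'b set \<Rightarrow> 'b \<Rightarrow> real" where
  "reach_prob P T x = (SUP n. reach_within P T n x)"

definition diag :: "('a \<times> 'a) set" where
  "diag = {(s, s) | s. True}"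

definition robust_bisim :: "('a::finite \<Rightarrow> 'a pmf) \<Rightarrow> ('a \<Rightarrow> 'l) \<Rightarrow> 'a \<Rightarrow> 'a \<Rightarrow> bool" where
  "robust_bisim \<tau> lab s t \<longleftrightarrow> (\<exists>P\<in>policies \<tau> lab. reach_prob P diag (s, t) = 1)"

end

theory Submission
  imports Defs
begin

text \<open>
  Fix a policy P for \<tau> that takes (s, t) to the diagonal almost surely. By finiteness there
  is a k such that from every pair that reaches the diagonal almost surely, the diagonal is
  reached within k steps with probability at least 1/2. Every coupling of \<tau> u and \<tau> v
  can be perturbed into a coupling of \<sigma> u and \<sigma> v whose expected cost is larger by at
  most \<eta> = 2 |S| dF \<sigma> \<tau>: scale it down until its marginals fit under \<sigma> u and \<sigma> v, then
  couple the leftover masses independently. As delta \<sigma> is a fixed point of Delta \<sigma>, this gives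
  delta \<sigma> u v \<le> E[delta \<sigma> | P (u, v)] + \<eta> on such pairs. Iterating k times, the maximum M
  of delta \<sigma> over these pairs satisfies M \<le> M / 2 + k \<eta>, hence
  delta \<sigma> s t \<le> 4 k |S| dF \<sigma> \<tau>.
\<close>

section \<open>Couplings of finite distributions\<close>

lemma sum_UNIV_prod:
  fixes h :: "'a::finite \<times> 'b::finite \<Rightarrow> 'c::comm_monoid_add"
  shows "(\<Sum>z\<in>UNIV. h z) = (\<Sum>x\<in>UNIV. \<Sum>y\<in>UNIV. h (x, y))"
  by (simp add: sum.cartesian_product)

lemma sum_pmf_UNIV [simp]: "(\<Sum>x\<in>UNIV. pmf p x) = 1" for p :: "'a::finite pmf"
  by (rule sum_pmf_eq_1) auto

lemma expectation_eq_sum: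
  fixes p :: "'a::finite pmf" and f :: "'a \<Rightarrow> real"
  shows "measure_pmf.expectation p f = (\<Sum>x\<in>UNIV. pmf p x * f x)"
  by (subst integral_measure_pmf_real[of UNIV]) (auto simp: mult.commute)

lemma pmf_map_fst_finite:
  fixes \<omega> :: "('a::finite \<times> 'b::finite) pmf"
  shows "pmf (map_pmf fst \<omega>) x = (\<Sum>y\<in>UNIV. pmf \<omega> (x, y))"
proof -
  have "pmf (map_pmf fst \<omega>) x = sum (pmf \<omega>) (fst -` {x})"
    by (simp add: pmf_map measure_measure_pmf_finite)
  also have "fst -` {x} = Pair x ` UNIV"
    by auto
  finally show ?thesis
    by (simp add: sum.reindex inj_on_def)
qed

lemma pmf_map_snd_finite:
  fixes \<omega> :: "('a::finite \<times> 'b::finite) pmf"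
  shows "pmf (map_pmf snd \<omega>) y = (\<Sum>x\<in>UNIV. pmf \<omega> (x, y))"
proof -
  have "pmf (map_pmf snd \<omega>) y = sum (pmf \<omega>) (snd -` {y})"
    by (simp add: pmf_map measure_measure_pmf_finite)
  also have "snd -` {y} = (\<lambda>x. (x, y)) ` UNIV"
    by auto
  finally show ?thesis
    by (simp add: sum.reindex inj_on_def)
qed

lemma pmf_embed_pmf_finite:
  fixes g :: "'a::finite \<Rightarrow> real"
  assumes "\<And>x. 0 \<le> g x" and "(\<Sum>x\<in>UNIV. g x) = 1"
  shows "pmf (embed_pmf g) x = g x"
proof (rule pmf_embed_pmf)
  have "(\<integral>\<^sup>+x. ennreal (g x) \<partial>count_space UNIV) = ennreal (\<Sum>x\<in>UNIV. g x)"
    using assms(1) by (simp add: nn_integral_count_space_finite sum_ennreal)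
  then show "(\<integral>\<^sup>+x. ennreal (g x) \<partial>count_space UNIV) = 1"
    using assms(2) by simp
qed (fact assms(1))

lemma couplings_iff_marginal_sums:
  fixes \<omega> :: "('a::finite \<times> 'a) pmf"
  shows "\<omega> \<in> couplings \<mu> \<nu> \<longleftrightarrow>
    (\<forall>x. (\<Sum>y\<in>UNIV. pmf \<omega> (x, y)) = pmf \<mu> x) \<and> (\<forall>y. (\<Sum>x\<in>UNIV. pmf \<omega> (x, y)) = pmf \<nu> y)"
  by (auto simp: couplings_def pmf_map_fst_finite pmf_map_snd_finite intro!: pmf_eqI)

lemma pair_pmf_in_couplings: "pair_pmf \<mu> \<nu> \<in> couplings \<mu> \<nu>"
  by (simp add: couplings_def map_fst_pair_pmf map_snd_pair_pmf)

lemma diagonal_coupling: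
  "map_pmf (\<lambda>x. (x, x)) \<mu> \<in> couplings \<mu> \<mu>"
  by (simp add: couplings_def pmf.map_comp o_def)

lemma cost_diagonal_coupling:
  fixes \<mu> :: "'a::finite pmf" and d :: "'a \<Rightarrow> 'a \<Rightarrow> real"
  shows "(\<Sum>(u, v)\<in>UNIV. pmf (map_pmf (\<lambda>x. (x, x)) \<mu>) (u, v) * d u v) = (\<Sum>x\<in>UNIV. pmf \<mu> x * d x x)"
proof -
  have "(\<Sum>(u, v)\<in>UNIV. pmf (map_pmf (\<lambda>x. (x, x)) \<mu>) (u, v) * d u v)
      = measure_pmf.expectation (map_pmf (\<lambda>x. (x, x)) \<mu>) (case_prod d)"
    by (simp add: expectation_eq_sum split_def)
  also have "\<dots> = measure_pmf.expectation \<mu> (\<lambda>x. d x x)"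
    by simp
  finally show ?thesis
    by (simp add: expectation_eq_sum)
qed

lemma coupling_above_subcoupling:
  fixes \<mu> \<nu> :: "'a::finite pmf" and \<theta> :: "'a \<times> 'a \<Rightarrow> real"
  assumes nonneg: "\<And>z. 0 \<le> \<theta> z"
    and fst_le: "\<And>x. (\<Sum>y\<in>UNIV. \<theta> (x, y)) \<le> pmf \<mu> x"
    and snd_le: "\<And>y. (\<Sum>x\<in>UNIV. \<theta> (x, y)) \<le> pmf \<nu> y"
  obtains \<omega> where "\<omega> \<in> couplings \<mu> \<nu>" and "\<And>z. \<theta> z \<le> pmf \<omega> z"
proof -
  define \<alpha> where "\<alpha> x = pmf \<mu> x - (\<Sum>y\<in>UNIV. \<theta> (x, y))" for x
  define \<beta> where "\<beta> y = pmf \<nu> y - (\<Sum>x\<in>UNIV. \<theta> (x, y))" for y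
  define r where "r = 1 - (\<Sum>z\<in>UNIV. \<theta> z)"
  have \<alpha>_nonneg: "0 \<le> \<alpha> x" and \<beta>_nonneg: "0 \<le> \<beta> x" for x
    using fst_le snd_le by (simp_all add: \<alpha>_def \<beta>_def)
  have sum_\<alpha>: "(\<Sum>x\<in>UNIV. \<alpha> x) = r"
    by (simp add: \<alpha>_def r_def sum_subtractf sum_UNIV_prod)
  have sum_\<beta>: "(\<Sum>y\<in>UNIV. \<beta> y) = r"
    by (simp add: \<beta>_def r_def sum_subtractf sum_UNIV_prod, subst sum.swap, rule refl)
  have r_nonneg: "0 \<le> r"
    using sum_\<alpha> \<alpha>_nonneg by (metis sum_nonneg)
  have \<alpha>_zero: "\<alpha> x = 0" and \<beta>_zero: "\<beta> x = 0" if "r = 0" for x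
    using that sum_\<alpha> sum_\<beta> \<alpha>_nonneg \<beta>_nonneg by (simp_all add: sum_nonneg_eq_0_iff)
  \<comment> \<open>the residuals \<alpha> and \<beta> both have mass r and are glued independently; if r = 0 they vanish,
    and x / 0 = 0 makes g = \<theta>\<close>
  define g where "g z = \<theta> z + \<alpha> (fst z) * \<beta> (snd z) / r" for z
  have g_ge: "\<theta> z \<le> g z" for z
    using \<alpha>_nonneg \<beta>_nonneg r_nonneg by (simp add: g_def)
  have g_fst: "(\<Sum>y\<in>UNIV. g (x, y)) = pmf \<mu> x" for x
    using \<alpha>_zero[of x]
    by (cases "r = 0") (auto simp: g_def sum.distrib \<alpha>_def sum_divide_distrib[symmetric]
        sum_distrib_left[symmetric] sum_\<beta>)
  have g_snd: "(\<Sum>x\<in>UNIV. g (x, y)) = pmf \<nu> y" for y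
    using \<beta>_zero[of y]
    by (cases "r = 0") (auto simp: g_def sum.distrib \<beta>_def sum_divide_distrib[symmetric]
        sum_distrib_right[symmetric] sum_\<alpha>)
  have pmf_g: "pmf (embed_pmf g) z = g z" for z
  proof (rule pmf_embed_pmf_finite)
    show "0 \<le> g z" for z
      using nonneg g_ge order_trans by blast
    show "(\<Sum>z\<in>UNIV. g z) = 1"
      by (simp add: sum_UNIV_prod g_fst)
  qed
  show thesis
  proof
    show "embed_pmf g \<in> couplings \<mu> \<nu>"
      by (simp add: couplings_iff_marginal_sums pmf_g g_fst g_snd)
    show "\<theta> z \<le> pmf (embed_pmf g) z" for z
      by (simp add: pmf_g g_ge)
  qed
qed

lemma cost_le_subcoupling_cost:
  fixes \<omega> :: "'b::finite pmf" and \<theta> f :: "'b \<Rightarrow> real"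
  assumes "\<And>z. \<theta> z \<le> pmf \<omega> z" and "\<And>z. 0 \<le> f z" and "\<And>z. f z \<le> 1"
  shows "(\<Sum>z\<in>UNIV. pmf \<omega> z * f z) \<le> (\<Sum>z\<in>UNIV. \<theta> z * f z) + (1 - (\<Sum>z\<in>UNIV. \<theta> z))"
proof -
  have "(\<Sum>z\<in>UNIV. pmf \<omega> z * f z) = (\<Sum>z\<in>UNIV. \<theta> z * f z) + (\<Sum>z\<in>UNIV. (pmf \<omega> z - \<theta> z) * f z)"
    by (simp add: left_diff_distrib flip: sum.distrib)
  also have "(\<Sum>z\<in>UNIV. (pmf \<omega> z - \<theta> z) * f z) \<le> (\<Sum>z\<in>UNIV. pmf \<omega> z - \<theta> z)"
    using assms by (intro sum_mono) (simp add: mult_left_le)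
  finally show ?thesis
    by (simp add: sum_subtractf)
qed

lemma scaling_below:
  fixes p p' :: "'a \<Rightarrow> real"
  assumes "\<And>x. 0 \<le> p x" and "\<And>x. 0 \<le> p' x"
  obtains a where "\<And>x. 0 \<le> a x \<and> a x \<le> 1"
    and "\<And>x. p x * a x \<le> p' x" and "\<And>x. p x * (1 - a x) \<le> \<bar>p x - p' x\<bar>"
proof
  define a where "a x = (if p x = 0 then 1 else min 1 (p' x / p x))" for x
  have "p x * a x = min (p x) (p' x)" for x
    using assms[of x] by (auto simp: a_def min_def field_simps)
  then show "0 \<le> a x \<and> a x \<le> 1" "p x * a x \<le> p' x" "p x * (1 - a x) \<le> \<bar>p x - p' x\<bar>" for x
    using assms[of x] by (auto simp: a_def right_diff_distrib)
qed

lemma thinning_lost_mass: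
  fixes \<omega> :: "('a::finite \<times> 'b::finite) pmf" and a :: "'a \<Rightarrow> real" and b :: "'b \<Rightarrow> real"
  assumes "\<And>x. (\<Sum>y\<in>UNIV. pmf \<omega> (x, y)) = p x" and "\<And>y. (\<Sum>x\<in>UNIV. pmf \<omega> (x, y)) = q y"
    and "\<And>x. 0 \<le> a x \<and> a x \<le> 1" and "\<And>y. 0 \<le> b y \<and> b y \<le> 1"
  shows "1 - (\<Sum>z\<in>UNIV. pmf \<omega> z * a (fst z) * b (snd z))
    \<le> (\<Sum>x\<in>UNIV. p x * (1 - a x)) + (\<Sum>y\<in>UNIV. q y * (1 - b y))"
proof -
  have "1 - (\<Sum>z\<in>UNIV. pmf \<omega> z * a (fst z) * b (snd z))
      = (\<Sum>z\<in>UNIV. pmf \<omega> z * (1 - a (fst z) * b (snd z)))"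
    by (simp add: right_diff_distrib sum_subtractf mult.assoc)
  also have "\<dots> \<le> (\<Sum>z\<in>UNIV. pmf \<omega> z * (1 - a (fst z)) + pmf \<omega> z * (1 - b (snd z)))"
  proof (intro sum_mono)
    fix z
    have "0 \<le> (1 - a (fst z)) * (1 - b (snd z))"
      using assms(3,4) by simp
    then have "1 - a (fst z) * b (snd z) \<le> (1 - a (fst z)) + (1 - b (snd z))"
      by (simp add: algebra_simps)
    then have "pmf \<omega> z * (1 - a (fst z) * b (snd z)) \<le> pmf \<omega> z * ((1 - a (fst z)) + (1 - b (snd z)))"
      by (rule mult_left_mono) simp
    then show "pmf \<omega> z * (1 - a (fst z) * b (snd z))
        \<le> pmf \<omega> z * (1 - a (fst z)) + pmf \<omega> z * (1 - b (snd z))"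
      by (simp only: distrib_left)
  qed
  also have "\<dots> = (\<Sum>z\<in>UNIV. pmf \<omega> z * (1 - a (fst z))) + (\<Sum>z\<in>UNIV. pmf \<omega> z * (1 - b (snd z)))"
    by (rule sum.distrib)
  also have "(\<Sum>z\<in>UNIV. pmf \<omega> z * (1 - a (fst z))) = (\<Sum>x\<in>UNIV. (\<Sum>y\<in>UNIV. pmf \<omega> (x, y)) * (1 - a x))"
    by (simp add: sum_UNIV_prod sum_distrib_right)
  also have "(\<Sum>z\<in>UNIV. pmf \<omega> z * (1 - b (snd z))) = (\<Sum>y\<in>UNIV. (\<Sum>x\<in>UNIV. pmf \<omega> (x, y)) * (1 - b y))"
    by (subst sum_UNIV_prod, subst sum.swap) (simp add: sum_distrib_right)
  finally show ?thesis
    using assms(1,2) by simp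
qed

lemma subcoupling_of_perturbation:
  fixes \<mu> \<nu> \<mu>' \<nu>' :: "'a::finite pmf"
  assumes \<omega>: "\<omega> \<in> couplings \<mu> \<nu>"
    and close_\<mu>: "\<And>x. \<bar>pmf \<mu> x - pmf \<mu>' x\<bar> \<le> e"
    and close_\<nu>: "\<And>y. \<bar>pmf \<nu> y - pmf \<nu>' y\<bar> \<le> e"
  obtains \<theta> where "\<And>z. 0 \<le> \<theta> z" and "\<And>z. \<theta> z \<le> pmf \<omega> z"
    and "\<And>x. (\<Sum>y\<in>UNIV. \<theta> (x, y)) \<le> pmf \<mu>' x" and "\<And>y. (\<Sum>x\<in>UNIV. \<theta> (x, y)) \<le> pmf \<nu>' y"
    and "1 - (\<Sum>z\<in>UNIV. \<theta> z) \<le> 2 * real CARD('a) * e"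
proof -
  obtain a where a: "\<And>x. 0 \<le> a x \<and> a x \<le> 1" and a_le: "\<And>x. pmf \<mu> x * a x \<le> pmf \<mu>' x"
    and a_defect: "\<And>x. pmf \<mu> x * (1 - a x) \<le> \<bar>pmf \<mu> x - pmf \<mu>' x\<bar>"
    using scaling_below[of "pmf \<mu>" "pmf \<mu>'"] by auto
  obtain b where b: "\<And>y. 0 \<le> b y \<and> b y \<le> 1" and b_le: "\<And>y. pmf \<nu> y * b y \<le> pmf \<nu>' y"
    and b_defect: "\<And>y. pmf \<nu> y * (1 - b y) \<le> \<bar>pmf \<nu> y - pmf \<nu>' y\<bar>"
    using scaling_below[of "pmf \<nu>" "pmf \<nu>'"] by auto
  have marg_\<mu>: "\<And>x. (\<Sum>y\<in>UNIV. pmf \<omega> (x, y)) = pmf \<mu> x"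
    and marg_\<nu>: "\<And>y. (\<Sum>x\<in>UNIV. pmf \<omega> (x, y)) = pmf \<nu> y"
    using \<omega> by (simp_all add: couplings_iff_marginal_sums)
  define \<theta> where "\<theta> z = pmf \<omega> z * a (fst z) * b (snd z)" for z
  show thesis
  proof
    show "0 \<le> \<theta> z" and "\<theta> z \<le> pmf \<omega> z" for z
      using a[of "fst z"] b[of "snd z"] by (simp_all add: \<theta>_def mult.assoc mult_left_le mult_le_one)
    show "(\<Sum>y\<in>UNIV. \<theta> (x, y)) \<le> pmf \<mu>' x" for x
    proof -
      have "(\<Sum>y\<in>UNIV. \<theta> (x, y)) \<le> (\<Sum>y\<in>UNIV. pmf \<omega> (x, y) * a x)"
        using a b by (intro sum_mono) (simp add: \<theta>_def mult_left_le)
      also have "\<dots> = pmf \<mu> x * a x"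
        by (simp add: marg_\<mu> flip: sum_distrib_right)
      finally show ?thesis
        using a_le order_trans by blast
    qed
    show "(\<Sum>x\<in>UNIV. \<theta> (x, y)) \<le> pmf \<nu>' y" for y
    proof -
      have "(\<Sum>x\<in>UNIV. \<theta> (x, y)) \<le> (\<Sum>x\<in>UNIV. pmf \<omega> (x, y) * b y)"
      proof (intro sum_mono)
        fix x
        show "\<theta> (x, y) \<le> pmf \<omega> (x, y) * b y"
          unfolding \<theta>_def fst_conv snd_conv using a[of x] b[of y]
          by (intro mult_right_mono mult_left_le) auto
      qed
      also have "\<dots> = pmf \<nu> y * b y"
        by (simp add: marg_\<nu> flip: sum_distrib_right)
      finally show ?thesis
        using b_le order_trans by blast
    qed
    have "1 - (\<Sum>z\<in>UNIV. \<theta> z) \<le> (\<Sum>x\<in>UNIV. pmf \<mu> x * (1 - a x)) + (\<Sum>y\<in>UNIV. pmf \<nu> y * (1 - b y))"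
      unfolding \<theta>_def by (rule thinning_lost_mass[OF marg_\<mu> marg_\<nu> a b])
    also have "\<dots> \<le> (\<Sum>x\<in>(UNIV::'a set). e) + (\<Sum>y\<in>(UNIV::'a set). e)"
    proof (intro add_mono sum_mono)
      show "pmf \<mu> x * (1 - a x) \<le> e" for x
        using a_defect[of x] close_\<mu>[of x] by linarith
      show "pmf \<nu> y * (1 - b y) \<le> e" for y
        using b_defect[of y] close_\<nu>[of y] by linarith
    qed
    finally show "1 - (\<Sum>z\<in>UNIV. \<theta> z) \<le> 2 * real CARD('a) * e"
      by (simp add: mult_ac)
  qed
qed

lemma coupling_perturbation:
  fixes \<mu> \<nu> \<mu>' \<nu>' :: "'a::finite pmf" and d :: "'a \<Rightarrow> 'a \<Rightarrow> real"
  assumes \<omega>: "\<omega> \<in> couplings \<mu> \<nu>" and d: "unit_valued d"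
    and close_\<mu>: "\<And>x. \<bar>pmf \<mu> x - pmf \<mu>' x\<bar> \<le> e"
    and close_\<nu>: "\<And>y. \<bar>pmf \<nu> y - pmf \<nu>' y\<bar> \<le> e"
  obtains \<omega>' where "\<omega>' \<in> couplings \<mu>' \<nu>'"
    and "(\<Sum>(u, v)\<in>UNIV. pmf \<omega>' (u, v) * d u v)
           \<le> (\<Sum>(u, v)\<in>UNIV. pmf \<omega> (u, v) * d u v) + 2 * real CARD('a) * e"
proof -
  obtain \<theta> where \<theta>_nonneg: "\<And>z. 0 \<le> \<theta> z" and \<theta>_le: "\<And>z. \<theta> z \<le> pmf \<omega> z"
    and \<theta>_fst: "\<And>x. (\<Sum>y\<in>UNIV. \<theta> (x, y)) \<le> pmf \<mu>' x"
    and \<theta>_snd: "\<And>y. (\<Sum>x\<in>UNIV. \<theta> (x, y)) \<le> pmf \<nu>' y"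
    and lost_mass: "1 - (\<Sum>z\<in>UNIV. \<theta> z) \<le> 2 * real CARD('a) * e"
    using subcoupling_of_perturbation[OF \<omega> close_\<mu> close_\<nu>] by blast
  obtain \<omega>' where \<omega>': "\<omega>' \<in> couplings \<mu>' \<nu>'" and \<theta>_le': "\<And>z. \<theta> z \<le> pmf \<omega>' z"
    using coupling_above_subcoupling[OF \<theta>_nonneg \<theta>_fst \<theta>_snd] by blast
  have d_bounds: "0 \<le> case_prod d z" "case_prod d z \<le> 1" for z
    using d by (auto simp: unit_valued_def split: prod.split)
  have "(\<Sum>z\<in>UNIV. pmf \<omega>' z * case_prod d z)
      \<le> (\<Sum>z\<in>UNIV. \<theta> z * case_prod d z) + (1 - (\<Sum>z\<in>UNIV. \<theta> z))"
    using cost_le_subcoupling_cost[OF \<theta>_le' d_bounds] .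
  also have "(\<Sum>z\<in>UNIV. \<theta> z * case_prod d z) \<le> (\<Sum>z\<in>UNIV. pmf \<omega> z * case_prod d z)"
    using \<theta>_le d_bounds by (intro sum_mono mult_right_mono)
  finally show thesis
    using \<omega>' lost_mass by (intro that) (auto simp: split_def)
qed

section \<open>The bisimilarity distance as a least fixed point\<close>

lemma coupling_cost_bounds:
  fixes d :: "'a::finite \<Rightarrow> 'a \<Rightarrow> real"
  assumes "unit_valued d"
  shows "0 \<le> (\<Sum>(u, v)\<in>UNIV. pmf \<omega> (u, v) * d u v)"
    and "(\<Sum>(u, v)\<in>UNIV. pmf \<omega> (u, v) * d u v) \<le> 1"
proof -
  show "0 \<le> (\<Sum>(u, v)\<in>UNIV. pmf \<omega> (u, v) * d u v)"
    using assms by (intro sum_nonneg) (auto simp: unit_valued_def)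
  have "(\<Sum>(u, v)\<in>UNIV. pmf \<omega> (u, v) * d u v) \<le> (\<Sum>z\<in>UNIV. pmf \<omega> z)"
    using assms by (intro sum_mono) (auto simp: unit_valued_def intro: mult_left_le)
  then show "(\<Sum>(u, v)\<in>UNIV. pmf \<omega> (u, v) * d u v) \<le> 1"
    by simp
qed

lemma bdd_below_coupling_costs:
  fixes d :: "'a::finite \<Rightarrow> 'a \<Rightarrow> real"
  assumes "unit_valued d"
  shows "bdd_below ((\<lambda>\<omega>. \<Sum>(u, v)\<in>UNIV. pmf \<omega> (u, v) * d u v) ` C)"
  using coupling_cost_bounds(1)[OF assms] by (intro bdd_belowI[where m = 0]) auto

lemma Delta_le_coupling_cost:
  fixes d :: "'a::finite \<Rightarrow> 'a \<Rightarrow> real"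
  assumes "unit_valued d" and "lab x = lab y" and "\<omega> \<in> couplings (\<sigma> x) (\<sigma> y)"
  shows "Delta \<sigma> lab d x y \<le> (\<Sum>(u, v)\<in>UNIV. pmf \<omega> (u, v) * d u v)"
  using assms by (simp add: Delta_def cINF_lower[OF bdd_below_coupling_costs[OF assms(1)]])

lemma unit_valued_Delta:
  fixes d :: "'a::finite \<Rightarrow> 'a \<Rightarrow> real"
  assumes "unit_valued d"
  shows "unit_valued (Delta \<sigma> lab d)"
  unfolding unit_valued_def
proof (intro allI conjI)
  fix x y
  show "0 \<le> Delta \<sigma> lab d x y"
    unfolding Delta_def using pair_pmf_in_couplings coupling_cost_bounds(1)[OF assms]
    by (auto intro!: cINF_greatest)
  show "Delta \<sigma> lab d x y \<le> 1"
  proof (cases "lab x = lab y")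
    case True
    show ?thesis
      using Delta_le_coupling_cost[where \<sigma> = \<sigma>, OF assms True pair_pmf_in_couplings]
        coupling_cost_bounds(2)[OF assms]
      by (rule order_trans)
  qed (simp add: Delta_def)
qed

lemma Delta_mono:
  fixes d d' :: "'a::finite \<Rightarrow> 'a \<Rightarrow> real"
  assumes "unit_valued d" and "d \<le> d'"
  shows "Delta \<sigma> lab d \<le> Delta \<sigma> lab d'"
proof (intro le_funI)
  fix x y
  have "(\<Sum>(u, v)\<in>UNIV. pmf \<omega> (u, v) * d u v) \<le> (\<Sum>(u, v)\<in>UNIV. pmf \<omega> (u, v) * d' u v)" for \<omega>
    using assms(2) by (intro sum_mono) (auto intro: mult_left_mono simp: le_fun_def)
  then show "Delta \<sigma> lab d x y \<le> Delta \<sigma> lab d' x y"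
    unfolding Delta_def using pair_pmf_in_couplings
    by (auto intro!: cINF_mono[OF _ bdd_below_coupling_costs[OF assms(1)]])
qed

text \<open>Knaster--Tarski by hand, since real-valued functions do not form a complete lattice.\<close>

lemma Delta_least_fixed_point:
  fixes \<sigma> :: "'a::finite \<Rightarrow> 'a pmf"
  obtains d\<^sub>0 where "unit_valued d\<^sub>0" and "Delta \<sigma> lab d\<^sub>0 = d\<^sub>0"
    and "\<And>d. unit_valued d \<Longrightarrow> Delta \<sigma> lab d \<le> d \<Longrightarrow> d\<^sub>0 \<le> d"
proof -
  define A where "A = {d. unit_valued d \<and> Delta \<sigma> lab d \<le> d}"
  define d\<^sub>0 where "d\<^sub>0 x y = (INF d\<in>A. d x y)" for x y
  have one_in_A: "(\<lambda>_ _. 1) \<in> A"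
    using unit_valued_Delta[of "\<lambda>_ _. 1"] by (auto simp: A_def unit_valued_def le_fun_def)
  have lower: "d\<^sub>0 \<le> d" if "d \<in> A" for d
  proof (intro le_funI)
    fix x y
    have "bdd_below ((\<lambda>d. d x y) ` A)"
      by (intro bdd_belowI[where m = 0]) (auto simp: A_def unit_valued_def)
    then show "d\<^sub>0 x y \<le> d x y"
      unfolding d\<^sub>0_def using that by (rule cINF_lower)
  qed
  have greatest: "e \<le> d\<^sub>0" if "\<And>d. d \<in> A \<Longrightarrow> e \<le> d" for e
    using one_in_A that by (auto simp: d\<^sub>0_def le_fun_def intro!: cINF_greatest)
  have unit: "unit_valued d\<^sub>0"
    using lower[OF one_in_A] greatest[of "\<lambda>_ _. 0"]
    by (auto simp: unit_valued_def le_fun_def A_def)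
  have pre: "Delta \<sigma> lab d\<^sub>0 \<le> d\<^sub>0"
    using Delta_mono[OF unit lower] by (intro greatest) (auto simp: A_def intro: order_trans)
  then have "Delta \<sigma> lab d\<^sub>0 \<in> A"
    using unit_valued_Delta[OF unit] Delta_mono[OF unit_valued_Delta[OF unit]] by (auto simp: A_def)
  then have "Delta \<sigma> lab d\<^sub>0 = d\<^sub>0"
    using lower pre by (auto intro: order.antisym)
  then show thesis
    using that unit lower by (auto simp: A_def)
qed

lemma
  fixes \<sigma> :: "'a::finite \<Rightarrow> 'a pmf"
  shows unit_valued_delta: "unit_valued (delta \<sigma> lab)"
    and Delta_delta: "Delta \<sigma> lab (delta \<sigma> lab) = delta \<sigma> lab"
    and delta_le_prefixed_point: "unit_valued d \<Longrightarrow> Delta \<sigma> lab d \<le> d \<Longrightarrow> delta \<sigma> lab \<le> d"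
proof -
  obtain d\<^sub>0 where unit: "unit_valued d\<^sub>0" and fixed: "Delta \<sigma> lab d\<^sub>0 = d\<^sub>0"
    and least: "\<And>d. unit_valued d \<Longrightarrow> Delta \<sigma> lab d \<le> d \<Longrightarrow> d\<^sub>0 \<le> d"
    using Delta_least_fixed_point by blast
  have "delta \<sigma> lab = d\<^sub>0"
    unfolding delta_def using unit fixed least by (intro the_equality) (auto intro: order.antisym)
  then show "unit_valued (delta \<sigma> lab)" "Delta \<sigma> lab (delta \<sigma> lab) = delta \<sigma> lab"
    "unit_valued d \<Longrightarrow> Delta \<sigma> lab d \<le> d \<Longrightarrow> delta \<sigma> lab \<le> d"
    using unit fixed least by auto
qed

lemma delta_refl [simp]:
  fixes \<sigma> :: "'a::finite \<Rightarrow> 'a pmf"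
  shows "delta \<sigma> lab x x = 0"
proof -
  define d where "d u v = (if u = v then 0 else 1 :: real)" for u v :: 'a
  have unit: "unit_valued d"
    by (simp add: unit_valued_def d_def)
  have "Delta \<sigma> lab d u v \<le> d u v" for u v
  proof (cases "u = v")
    case True
    have "Delta \<sigma> lab d u u \<le> (\<Sum>x\<in>UNIV. pmf (\<sigma> u) x * d x x)"
      using Delta_le_coupling_cost[where \<sigma> = \<sigma>, OF unit refl diagonal_coupling]
      by (simp add: cost_diagonal_coupling)
    then show ?thesis
      using True by (simp add: d_def)
  next
    case False
    then show ?thesis
      using unit_valued_Delta[OF unit, of \<sigma> lab] by (auto simp: d_def unit_valued_def)
  qed
  then have "delta \<sigma> lab \<le> d"
    by (intro delta_le_prefixed_point[OF unit] le_funI)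
  then have "delta \<sigma> lab x x \<le> d x x"
    by (simp add: le_fun_def)
  then show ?thesis
    using unit_valued_delta[of \<sigma> lab] by (simp add: d_def unit_valued_def order.antisym)
qed

section \<open>Reachability in finite Markov chains\<close>

lemma reach_within_bounds:
  fixes P :: "'b::finite \<Rightarrow> 'b pmf"
  shows "0 \<le> reach_within P T n x \<and> reach_within P T n x \<le> 1"
proof (induction n arbitrary: x)
  case (Suc n)
  show ?case
  proof (cases "x \<in> T")
    case False
    have "(\<Sum>z\<in>UNIV. pmf (P x) z * reach_within P T n z) \<le> (\<Sum>z\<in>UNIV. pmf (P x) z)"
      using Suc.IH by (intro sum_mono mult_left_le) auto
    then show ?thesis
      using Suc.IH False by (auto simp: expectation_eq_sum intro: sum_nonneg)
  qed simp
qed simp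

lemma reach_within_mono:
  fixes P :: "'b::finite \<Rightarrow> 'b pmf"
  assumes "m \<le> n"
  shows "reach_within P T m x \<le> reach_within P T n x"
proof -
  have "reach_within P T n x \<le> reach_within P T (Suc n) x" for n x
  proof (induction n arbitrary: x)
    case 0
    show ?case
      using reach_within_bounds[of P T "Suc 0" x] by simp
  next
    case (Suc n)
    then show ?case
      by (cases "x \<in> T") (auto simp: expectation_eq_sum intro!: sum_mono mult_left_mono)
  qed
  then show ?thesis
    using assms by (rule lift_Suc_mono_le)
qed

lemma bdd_above_reach_within:
  fixes P :: "'b::finite \<Rightarrow> 'b pmf"
  shows "bdd_above (range (\<lambda>n. reach_within P T n x))"
  using reach_within_bounds by (intro bdd_aboveI[where M = 1]) auto

lemma reach_within_le_reach_prob: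
  fixes P :: "'b::finite \<Rightarrow> 'b pmf"
  shows "reach_within P T n x \<le> reach_prob P T x"
  unfolding reach_prob_def by (rule cSUP_upper[OF _ bdd_above_reach_within]) simp

lemma reach_prob_le:
  assumes "\<And>n. reach_within P T n x \<le> c"
  shows "reach_prob P T x \<le> c"
  unfolding reach_prob_def using assms by (intro cSUP_least) auto

lemma reach_prob_successor:
  fixes P :: "'b::finite \<Rightarrow> 'b pmf"
  assumes x: "x \<notin> T" "reach_prob P T x = 1" and y: "y \<in> set_pmf (P x)"
  shows "reach_prob P T y = 1"
proof -
  define c where "c = pmf (P x) y"
  define r where "r = reach_prob P T y"
  have c: "0 < c" "c \<le> 1"
    using y by (simp_all add: c_def pmf_positive pmf_le_1)
  have r: "0 \<le> r" "r \<le> 1"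
    using reach_within_le_reach_prob[of P T 0 y] reach_within_bounds[of P T 0 y]
      reach_within_bounds[of P T] by (auto simp: r_def intro: reach_prob_le order_trans)
  \<comment> \<open>with probability c the chain moves to y, from where it misses T with probability 1 - r\<close>
  have "reach_within P T n x \<le> 1 - c * (1 - r)" for n
  proof (cases n)
    case 0
    then show ?thesis
      using x c r by (simp add: mult_le_one)
  next
    case (Suc m)
    let ?R = "reach_within P T m"
    have "c * (1 - ?R y) \<le> (\<Sum>z\<in>UNIV. pmf (P x) z * (1 - ?R z))"
      unfolding c_def using reach_within_bounds[of P T m]
      by (intro member_le_sum mult_nonneg_nonneg) auto
    moreover have "c * (1 - r) \<le> c * (1 - ?R y)"
      using c reach_within_le_reach_prob[of P T m y] by (simp add: r_def)
    ultimately show ?thesis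
      using x Suc by (simp add: expectation_eq_sum right_diff_distrib sum_subtractf)
  qed
  then have "1 \<le> 1 - c * (1 - r)"
    using x by (metis reach_prob_le)
  then show ?thesis
    using c r by (simp add: r_def mult_le_0_iff)
qed

lemma reach_prob_eq_1_uniform_time:
  fixes P :: "'b::finite \<Rightarrow> 'b pmf"
  obtains k where "\<And>x. reach_prob P T x = 1 \<Longrightarrow> 1/2 \<le> reach_within P T k x"
proof -
  have "\<exists>n. reach_prob P T x = 1 \<longrightarrow> 1/2 < reach_within P T n x" for x
    using less_cSUP_iff[OF UNIV_not_empty bdd_above_reach_within, of "1/2" P T x]
    by (auto simp: reach_prob_def)
  then obtain N where N: "\<And>x. reach_prob P T x = 1 \<Longrightarrow> 1/2 < reach_within P T (N x) x"
    by metis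
  show thesis
  proof (rule that)
    fix x
    assume "reach_prob P T x = 1"
    moreover have "reach_within P T (N x) x \<le> reach_within P T (Max (range N)) x"
      by (intro reach_within_mono) simp
    ultimately show "1/2 \<le> reach_within P T (Max (range N)) x"
      using N by fastforce
  qed
qed

lemma drift_iterate:
  fixes P :: "'b::finite \<Rightarrow> 'b pmf" and D :: "'b \<Rightarrow> real"
  assumes \<eta>: "0 \<le> \<eta>"
    and target: "\<And>x. x \<in> T \<Longrightarrow> D x \<le> 0"
    and drift: "\<And>x. x \<notin> T \<Longrightarrow> reach_prob P T x = 1 \<Longrightarrow> D x \<le> (\<Sum>z\<in>UNIV. pmf (P x) z * D z) + \<eta>"
    and bound: "\<And>x. reach_prob P T x = 1 \<Longrightarrow> D x \<le> M"
    and y: "reach_prob P T y = 1"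
  shows "D y \<le> M * (1 - reach_within P T j y) + real j * \<eta>"
  using y
proof (induction j arbitrary: y)
  case 0
  then show ?case
    using bound target by (cases "y \<in> T") auto
next
  case (Suc j)
  show ?case
  proof (cases "y \<in> T")
    case True
    have "0 \<le> real (Suc j) * \<eta>"
      using \<eta> by simp
    then show ?thesis
      using target[OF True] True by simp
  next
    case False
    let ?R = "reach_within P T j"
    have "D y \<le> (\<Sum>z\<in>UNIV. pmf (P y) z * D z) + \<eta>"
      by (rule drift[OF False Suc.prems])
    also have "(\<Sum>z\<in>UNIV. pmf (P y) z * D z) \<le> (\<Sum>z\<in>UNIV. pmf (P y) z * (M * (1 - ?R z) + real j * \<eta>))"
    proof (intro sum_mono)
      fix z
      show "pmf (P y) z * D z \<le> pmf (P y) z * (M * (1 - ?R z) + real j * \<eta>)"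
      proof (cases "z \<in> set_pmf (P y)")
        case True
        then have "reach_prob P T z = 1"
          by (rule reach_prob_successor[OF False Suc.prems])
        then show ?thesis
          using Suc.IH by (simp add: mult_left_mono)
      qed (simp add: set_pmf_iff)
    qed
    also have "(\<Sum>z\<in>UNIV. pmf (P y) z * (M * (1 - ?R z) + real j * \<eta>))
        = M * (1 - reach_within P T (Suc j) y) + real j * \<eta>"
      using False
      by (simp add: expectation_eq_sum algebra_simps sum.distrib sum_subtractf
          flip: sum_distrib_left sum_distrib_right)
    finally show ?thesis
      by (simp add: algebra_simps)
  qed
qed

lemma drift_bound_by_reach_time:
  fixes P :: "'b::finite \<Rightarrow> 'b pmf" and D :: "'b \<Rightarrow> real"
  assumes \<eta>: "0 \<le> \<eta>"
    and target: "\<And>x. x \<in> T \<Longrightarrow> D x \<le> 0"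
    and drift: "\<And>x. x \<notin> T \<Longrightarrow> reach_prob P T x = 1 \<Longrightarrow> D x \<le> (\<Sum>z\<in>UNIV. pmf (P x) z * D z) + \<eta>"
    and half: "\<And>x. reach_prob P T x = 1 \<Longrightarrow> 1/2 \<le> reach_within P T k x"
    and x: "reach_prob P T x = 1"
  shows "D x \<le> 2 * real k * \<eta>"
proof -
  define M where "M = Max (insert 0 (D ` {x. reach_prob P T x = 1}))"
  have M_nonneg: "0 \<le> M"
    unfolding M_def by (intro Max_ge) auto
  have M_ge: "D y \<le> M" if "reach_prob P T y = 1" for y
    unfolding M_def using that by (intro Max_ge) auto
  have "M \<le> M / 2 + real k * \<eta>"
  proof -
    have "M \<in> insert 0 (D ` {x. reach_prob P T x = 1})"
      unfolding M_def by (intro Max_in) auto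
    then consider "M = 0" | y where "reach_prob P T y = 1" "M = D y"
      by blast
    then show ?thesis
    proof cases
      case 2
      have "M * (1 - reach_within P T k y) \<le> M * (1/2)"
        using half[OF 2(1)] M_nonneg by (intro mult_left_mono) auto
      moreover have "D y \<le> M * (1 - reach_within P T k y) + real k * \<eta>"
        using drift_iterate[OF \<eta> target drift M_ge 2(1)] .
      ultimately show ?thesis
        using 2(2) by linarith
    qed (use \<eta> in simp)
  qed
  then show ?thesis
    using M_ge[OF x] by linarith
qed

section \<open>Continuity of the distance\<close>

lemma pmf_diff_le_dF:
  fixes \<sigma> \<tau> :: "'a::finite \<Rightarrow> 'a pmf"
  shows "\<bar>pmf (\<tau> u) y - pmf (\<sigma> u) y\<bar> \<le> dF \<sigma> \<tau>"
proof -
  have "\<bar>pmf (\<sigma> u) y - pmf (\<tau> u) y\<bar> \<le> dF \<sigma> \<tau>"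
    unfolding dF_def by (rule Max_ge) (auto intro: image_eqI[where x = "(u, y)"])
  then show ?thesis
    by (simp add: abs_minus_commute)
qed

lemma dF_nonneg: "0 \<le> dF \<sigma> \<tau>"
  using pmf_diff_le_dF abs_ge_zero order_trans by blast

lemma policy_reach_diag_same_label:
  assumes P: "P \<in> policies \<tau> lab" and reach: "reach_prob P diag (u, v) = 1"
  shows "lab u = lab v"
proof (rule ccontr)
  assume different: "lab u \<noteq> lab v"
  then have "(u, v) \<notin> diag" and "P (u, v) = return_pmf (u, v)"
    using P by (auto simp: diag_def policies_def)
  then have "reach_within P diag n (u, v) = 0" for n
    by (induction n) auto
  then have "reach_prob P diag (u, v) \<le> 0"
    by (simp add: reach_prob_le)
  with reach show False
    by simp
qed

lemma delta_le_policy_step: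
  fixes \<tau> \<sigma> :: "'a::finite \<Rightarrow> 'a pmf"
  assumes "P \<in> policies \<tau> lab" and same_label: "lab u = lab v"
  shows "delta \<sigma> lab u v
    \<le> (\<Sum>z\<in>UNIV. pmf (P (u, v)) z * case_prod (delta \<sigma> lab) z) + 2 * real CARD('a) * dF \<sigma> \<tau>"
proof -
  have "P (u, v) \<in> couplings (\<tau> u) (\<tau> v)"
    using assms by (simp add: policies_def)
  then obtain \<omega> where \<omega>: "\<omega> \<in> couplings (\<sigma> u) (\<sigma> v)"
    and cost: "(\<Sum>(a, b)\<in>UNIV. pmf \<omega> (a, b) * delta \<sigma> lab a b)
      \<le> (\<Sum>(a, b)\<in>UNIV. pmf (P (u, v)) (a, b) * delta \<sigma> lab a b) + 2 * real CARD('a) * dF \<sigma> \<tau>"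
    using coupling_perturbation[OF _ unit_valued_delta pmf_diff_le_dF[where u = u] pmf_diff_le_dF[where u = v]]
    by blast
  have "delta \<sigma> lab u v = Delta \<sigma> lab (delta \<sigma> lab) u v"
    by (simp add: Delta_delta)
  also have "\<dots> \<le> (\<Sum>(a, b)\<in>UNIV. pmf \<omega> (a, b) * delta \<sigma> lab a b)"
    by (rule Delta_le_coupling_cost[OF unit_valued_delta same_label \<omega>])
  finally show ?thesis
    using cost by (simp add: split_def)
qed

lemma delta_le_dF:
  fixes \<tau> \<sigma> :: "'a::finite \<Rightarrow> 'a pmf"
  assumes P: "P \<in> policies \<tau> lab"
    and half: "\<And>x. reach_prob P diag x = 1 \<Longrightarrow> 1/2 \<le> reach_within P diag k x"
    and reach: "reach_prob P diag (s, t) = 1"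
  shows "delta \<sigma> lab s t \<le> 4 * real k * real CARD('a) * dF \<sigma> \<tau>"
proof -
  have "case_prod (delta \<sigma> lab) (s, t) \<le> 2 * real k * (2 * real CARD('a) * dF \<sigma> \<tau>)"
  proof (rule drift_bound_by_reach_time[OF _ _ _ half reach])
    show "0 \<le> 2 * real CARD('a) * dF \<sigma> \<tau>"
      by (simp add: dF_nonneg)
    show "case_prod (delta \<sigma> lab) x \<le> 0" if "x \<in> diag" for x
      using that by (auto simp: diag_def)
    show "case_prod (delta \<sigma> lab) x
        \<le> (\<Sum>z\<in>UNIV. pmf (P x) z * case_prod (delta \<sigma> lab) z) + 2 * real CARD('a) * dF \<sigma> \<tau>"
      if "reach_prob P diag x = 1" for x
      using that delta_le_policy_step[OF P policy_reach_diag_same_label[OF P]] by (cases x) auto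
  qed
  then show ?thesis
    by simp
qed

theorem theorem1:
  fixes \<tau> :: "'a::finite \<Rightarrow> 'a pmf" and lab :: "'a \<Rightarrow> 'l"
    and s t :: 'a and \<tau>s :: "nat \<Rightarrow> 'a \<Rightarrow> 'a pmf"
  assumes "card (range lab) \<ge> 2"
    and "robust_bisim \<tau> lab s t"
    and "(\<lambda>n. dF (\<tau>s n) \<tau>) \<longlonglongrightarrow> 0"
  shows "(\<lambda>n. delta (\<tau>s n) lab s t) \<longlonglongrightarrow> 0"
proof -
  obtain P where P: "P \<in> policies \<tau> lab" and reach: "reach_prob P diag (s, t) = 1"
    using assms(2) by (auto simp: robust_bisim_def)
  obtain k where half: "\<And>x. reach_prob P diag x = 1 \<Longrightarrow> 1/2 \<le> reach_within P diag k x"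
    using reach_prob_eq_1_uniform_time by blast
  define C where "C = 4 * real k * real CARD('a)"
  show ?thesis
  proof (rule real_tendsto_sandwich)
    show "\<forall>\<^sub>F n in sequentially. 0 \<le> delta (\<tau>s n) lab s t"
      using unit_valued_delta[of "\<tau>s _" lab] by (simp add: unit_valued_def)
    show "\<forall>\<^sub>F n in sequentially. delta (\<tau>s n) lab s t \<le> C * dF (\<tau>s n) \<tau>"
      using delta_le_dF[OF P half reach] by (simp add: C_def)
    show "(\<lambda>n. C * dF (\<tau>s n) \<tau>) \<longlonglongrightarrow> 0"
      using tendsto_mult_right_zero[OF assms(3)] .
  qed simp
qed

end
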